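(* Let $\mathbb F\subseteq\mathbb R$ be a subfield and $X\subseteq\mathbb F^n$ nonempty such that $\operatorname{conv}_{\mathbb R}(X)$ is a polyhedron. Then a nonempty subset $Y\subseteq X$ is a weak $\mathbb F$-face of $X$ if and only if $Y=\mathcal F\cap X$ for some face $\mathcal F$ of $\operatorname{conv}_{\mathbb R}(X)$. Moreover, in this case $\operatorname{conv}_{\mathbb R}(Y)=\mathcal F$.
   Context: For a subfield $\mathbb K\subseteq\mathbb R$ and $X\subseteq\mathbb R^n$: $\operatorname{conv}_{\mathbb K}(X)$ is the set of finite combinations $\sum r_sx_s$ with $x_s\in X$, $r_s\in\mathbb K\cap[0,\infty)$, $\sum r_s=1$; for $Y=\operatorname{conv}_{\mathbb K}(X)$, $\operatorname{relint}_{\mathbb K}(Y)=\{x\in Y:\forall y\in Y\ \exists z\in Y,\ t\in\mathbb K\cap(0,1),\ x=ty+(1-t)z\}$. $Y\subseteq X$ is a weak $\mathbb F$-face of $X$ if for every $U\subseteq X$, $\operatorname{conv}_{\mathbb F}(Y)\cap\operatorname{relint}_{\mathbb F}(\operatorname{conv}_{\mathbb F}(U))\ne\emptyset$ implies $U\subseteq Y$. A polyhedron is a finite intersection of closed affine half-spaces. A face of $\mathcal P\subseteq\mathbb R^n$ is $\mathcal P$ or $\mathcal P\cap H(v,w)$ where $H(v,w)=\{u:v\cdot(u-w)=0\}$, $\mathcal P\subseteq\{u:v\cdot(u-w)\ge0\}$, $\mathcal P\cap H(v,w)\ne\emptyset$. *)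

theory Defs
  imports "HOL-Analysis.Analysis"
begin

definition real_subfield :: "real set \<Rightarrow> bool" where
  "real_subfield K \<longleftrightarrow> 0 \<in> K \<and> 1 \<in> K \<and>
     (\<forall>a\<in>K. \<forall>b\<in>K. a + b \<in> K \<and> a * b \<in> K) \<and>
     (\<forall>a\<in>K. - a \<in> K) \<and> (\<forall>a\<in>K. a \<noteq> 0 \<longrightarrow> inverse a \<in> K)"

definition conv_K :: "real set \<Rightarrow> 'a::real_vector set \<Rightarrow> 'a set" where
  "conv_K K X = {y. \<exists>S r. finite S \<and> S \<subseteq> X \<and> (\<forall>s\<in>S. r s \<in> K \<and> 0 \<le> r s) \<and>
      sum r S = 1 \<and> (\<Sum>s\<in>S. r s *\<^sub>R s) = y}"

definition relint_K :: "real set \<Rightarrow> 'a::real_vector set \<Rightarrow> 'a set" where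
  "relint_K K Y = {x \<in> Y. \<forall>y\<in>Y. \<exists>z\<in>Y. \<exists>t\<in>K. 0 < t \<and> t < 1 \<and>
      x = t *\<^sub>R y + (1 - t) *\<^sub>R z}"

definition weak_face :: "real set \<Rightarrow> 'a::real_vector set \<Rightarrow> 'a set \<Rightarrow> bool" where
  "weak_face K X Y \<longleftrightarrow> Y \<subseteq> X \<and>
     (\<forall>U. U \<subseteq> X \<longrightarrow> conv_K K Y \<inter> relint_K K (conv_K K U) \<noteq> {} \<longrightarrow> U \<subseteq> Y)"

definition poly_face :: "'a::real_inner set \<Rightarrow> 'a set \<Rightarrow> bool" where
  "poly_face P Fc \<longleftrightarrow> Fc = P \<or>
     (\<exists>v w. P \<subseteq> {u. v \<bullet> (u - w) \<ge> 0} \<and> Fc = P \<inter> {u. v \<bullet> (u - w) = 0} \<and> Fc \<noteq> {})"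

end

theory Submission
  imports Defs
begin

(*
  The proof works with the library notion "T face_of C".  For a polyhedron, the faces in
  the sense of the paper (C itself or an exposed face) are exactly the nonempty faces
  (every face of a polyhedron is exposed), and every face T of conv X is the convex hull
  of T \<inter> X.  A face trace is a weak F-face because a face absorbs both endpoints of
  every open segment through one of its points.  Conversely, for a weak F-face Y we pick an
  F-rational point p in the relative interior of conv Y (the barycentre of an affine basis
  of Y) and let T be the face of C carrying p in its relative interior.  Then Y \<subseteq> T, and
  for x \<in> T \<inter> X the point p lies strictly between x and some q \<in> C.  Writing p as a
  positive combination of an affinely independent U \<subseteq> X containing x, its barycentric
  coordinates lie in F (they solve a linear system with coefficients in F uniquely, and
  Gaussian elimination stays inside F), so p lies in relint_F(conv_F U) and the weak face
  property forces x \<in> U \<subseteq> Y.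
*)

lemma subfield_zero: "real_subfield F \<Longrightarrow> 0 \<in> F"
  and subfield_one: "real_subfield F \<Longrightarrow> 1 \<in> F"
  and subfield_add: "real_subfield F \<Longrightarrow> a \<in> F \<Longrightarrow> b \<in> F \<Longrightarrow> a + b \<in> F"
  and subfield_mult: "real_subfield F \<Longrightarrow> a \<in> F \<Longrightarrow> b \<in> F \<Longrightarrow> a * b \<in> F"
  and subfield_uminus: "real_subfield F \<Longrightarrow> a \<in> F \<Longrightarrow> - a \<in> F"
  by (simp_all add: real_subfield_def)

lemma subfield_diff: "real_subfield F \<Longrightarrow> a \<in> F \<Longrightarrow> b \<in> F \<Longrightarrow> a - b \<in> F"
  using subfield_add[of F a "- b"] subfield_uminus by auto

lemma subfield_divide: "real_subfield F \<Longrightarrow> a \<in> F \<Longrightarrow> b \<in> F \<Longrightarrow> a / b \<in> F"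
  by (cases "b = 0") (auto simp: real_subfield_def divide_inverse)

lemma subfield_of_nat: "real_subfield F \<Longrightarrow> real n \<in> F"
  by (induction n) (auto simp: real_subfield_def)

lemma subfield_sum:
  assumes "real_subfield F" "\<And>x. x \<in> S \<Longrightarrow> f x \<in> F"
  shows "sum f S \<in> F"
  using assms(2)
  by (induction S rule: infinite_finite_induct) (auto simp: subfield_zero subfield_add assms(1))

definition solves :: "'v set \<Rightarrow> 'r set \<Rightarrow> ('r \<Rightarrow> 'v \<Rightarrow> real) \<Rightarrow> ('r \<Rightarrow> real) \<Rightarrow> ('v \<Rightarrow> real) \<Rightarrow> bool" where
  "solves V R A B m \<longleftrightarrow> (\<forall>r\<in>R. (\<Sum>k\<in>V. A r k * m k) = B r)"

text \<open>One step of Gaussian elimination: use the pivot row r0 to remove the unknown j from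
  every row.\<close>

definition eliminate :: "'v \<Rightarrow> 'r \<Rightarrow> ('r \<Rightarrow> 'v \<Rightarrow> real) \<Rightarrow> 'r \<Rightarrow> 'v \<Rightarrow> real" where
  "eliminate j r0 A = (\<lambda>r k. A r k - A r j / A r0 j * A r0 k)"

definition eliminate_rhs :: "'v \<Rightarrow> 'r \<Rightarrow> ('r \<Rightarrow> 'v \<Rightarrow> real) \<Rightarrow> ('r \<Rightarrow> real) \<Rightarrow> 'r \<Rightarrow> real" where
  "eliminate_rhs j r0 A B = (\<lambda>r. B r - A r j / A r0 j * B r0)"

definition pivot_value ::
    "'v set \<Rightarrow> 'v \<Rightarrow> 'r \<Rightarrow> ('r \<Rightarrow> 'v \<Rightarrow> real) \<Rightarrow> ('r \<Rightarrow> real) \<Rightarrow> ('v \<Rightarrow> real) \<Rightarrow> real" where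
  "pivot_value V j r0 A B m = (B r0 - (\<Sum>k\<in>V. A r0 k * m k)) / A r0 j"

lemma eliminate_residual:
  assumes "finite V" "j \<notin> V" "A r0 j \<noteq> 0"
  shows "(\<Sum>k\<in>V. eliminate j r0 A r k * m k) - eliminate_rhs j r0 A B r =
         ((\<Sum>k\<in>insert j V. A r k * m k) - B r)
         - A r j / A r0 j * ((\<Sum>k\<in>insert j V. A r0 k * m k) - B r0)"
proof -
  have "(\<Sum>k\<in>V. eliminate j r0 A r k * m k)
        = (\<Sum>k\<in>V. A r k * m k) - A r j / A r0 j * (\<Sum>k\<in>V. A r0 k * m k)"
    by (simp add: eliminate_def left_diff_distrib sum_subtractf sum_distrib_left mult.assoc)
  moreover have "A r j / A r0 j * (A r0 j * m j) = A r j * m j"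
    using assms(3) by simp
  ultimately show ?thesis
    using assms(1,2) by (simp add: eliminate_rhs_def algebra_simps)
qed

lemma eliminate_solves:
  assumes "finite V" "j \<notin> V" "r0 \<in> R" "A r0 j \<noteq> 0" and sol: "solves (insert j V) R A B l"
  shows "solves V R (eliminate j r0 A) (eliminate_rhs j r0 A B) l"
  unfolding solves_def
proof
  fix r assume "r \<in> R"
  then have "(\<Sum>k\<in>V. eliminate j r0 A r k * l k) - eliminate_rhs j r0 A B r = 0"
    using sol \<open>r0 \<in> R\<close> eliminate_residual[of V j A r0 r l B] assms(1,2,4) by (simp add: solves_def)
  then show "(\<Sum>k\<in>V. eliminate j r0 A r k * l k) = eliminate_rhs j r0 A B r" by simp
qed

lemma back_substitute_solves:
  assumes "finite V" "j \<notin> V" "A r0 j \<noteq> 0"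
    and sol: "solves V R (eliminate j r0 A) (eliminate_rhs j r0 A B) m"
  shows "solves (insert j V) R A B (m(j := pivot_value V j r0 A B m))"
  unfolding solves_def
proof
  define m' where "m' = m(j := pivot_value V j r0 A B m)"
  have agree: "(\<Sum>k\<in>V. f k * m' k) = (\<Sum>k\<in>V. f k * m k)" for f
    using assms(2) by (intro sum.cong) (auto simp: m'_def)
  have pivot_row: "(\<Sum>k\<in>insert j V. A r0 k * m' k) = B r0"
    using assms(1-3) agree[of "A r0"] by (simp add: m'_def pivot_value_def)
  fix r assume "r \<in> R"
  then have "(\<Sum>k\<in>V. eliminate j r0 A r k * m' k) - eliminate_rhs j r0 A B r = 0"
    using sol agree[of "eliminate j r0 A r"] by (simp add: solves_def)
  then show "(\<Sum>k\<in>insert j V. A r k * m' k) = B r"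
    using eliminate_residual[of V j A r0 r m' B] assms(1-3) pivot_row by simp
qed

text \<open>Proof by Gaussian elimination, one unknown at a time; if no row
  involves the unknown j, the solution would not be unique.\<close>

lemma unique_solution_in_subfield:
  assumes F: "real_subfield F" and "finite V"
    and coeffs: "\<And>r k. r \<in> R \<Longrightarrow> k \<in> V \<Longrightarrow> A r k \<in> F" and rhs: "\<And>r. r \<in> R \<Longrightarrow> B r \<in> F"
    and sol: "solves V R A B l"
    and uniq: "\<And>m. solves V R A B m \<Longrightarrow> \<forall>k\<in>V. m k = l k"
  shows "\<forall>k\<in>V. l k \<in> F"
  using \<open>finite V\<close> coeffs rhs sol uniq
proof (induction V arbitrary: A B rule: finite_induct)
  case empty
  then show ?case by simp
next
  case (insert j V)
  show ?case
  proof (cases "\<exists>r0\<in>R. A r0 j \<noteq> 0")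
    case True
    then obtain r0 where r0: "r0 \<in> R" "A r0 j \<noteq> 0" by blast
    have uniq_V: "\<forall>k\<in>V. m k = l k"
      if "solves V R (eliminate j r0 A) (eliminate_rhs j r0 A B) m" for m
      using insert.prems(4)[OF back_substitute_solves[OF insert(1,2) r0(2) that]] insert(2)
      by (metis fun_upd_other insertCI)
    have l_V: "\<forall>k\<in>V. l k \<in> F"
    proof (rule insert.IH)
      show "eliminate j r0 A r k \<in> F" if "r \<in> R" "k \<in> V" for r k
        using that r0 insert.prems(1) F
        by (auto simp: eliminate_def intro!: subfield_diff subfield_mult subfield_divide)
      show "eliminate_rhs j r0 A B r \<in> F" if "r \<in> R" for r
        using that r0 insert.prems(1,2) F
        by (auto simp: eliminate_rhs_def intro!: subfield_diff subfield_mult subfield_divide)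
      show "solves V R (eliminate j r0 A) (eliminate_rhs j r0 A B) l"
        using eliminate_solves[OF insert(1,2) r0 insert.prems(3)] .
    qed (rule uniq_V)
    have "l j = pivot_value V j r0 A B l"
      using insert.prems(4)[OF back_substitute_solves[OF insert(1,2) r0(2)
            eliminate_solves[OF insert(1,2) r0 insert.prems(3)]]]
      by simp
    moreover have "(\<Sum>k\<in>V. A r0 k * l k) \<in> F"
      using F r0(1) insert.prems(1) l_V by (intro subfield_sum subfield_mult) auto
    ultimately have "l j \<in> F"
      using r0(1) insert.prems(1,2) by (simp add: F pivot_value_def subfield_divide subfield_diff)
    with l_V show ?thesis by simp
  next
    case False
    have "solves (insert j V) R A B (l(j := l j + 1))"
      unfolding solves_def
    proof
      fix r assume "r \<in> R"
      then have "A r j = 0" using False by blast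
      then have "(\<Sum>k\<in>insert j V. A r k * (l(j := l j + 1)) k) = (\<Sum>k\<in>insert j V. A r k * l k)"
        by (intro sum.cong) auto
      then show "(\<Sum>k\<in>insert j V. A r k * (l(j := l j + 1)) k) = B r"
        using insert.prems(3) \<open>r \<in> R\<close> by (simp add: solves_def)
    qed
    then have "\<forall>k\<in>insert j V. (l(j := l j + 1)) k = l k"
      by (rule insert.prems(4))
    then show ?thesis by simp
  qed
qed

lemma barycentric_coords_in_subfield:
  fixes U :: "(real ^ 'n) set"
  assumes F: "real_subfield F" and UF: "\<forall>u\<in>U. \<forall>i. u $ i \<in> F" and pF: "\<forall>i. p $ i \<in> F"
    and indep: "\<not> affine_dependent U" and sum1: "sum l U = 1" and comb: "(\<Sum>u\<in>U. l u *\<^sub>R u) = p"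
  shows "\<forall>u\<in>U. l u \<in> F"
proof -
  have fin: "finite U" using aff_independent_finite[OF indep] .
  define A :: "'n option \<Rightarrow> real ^ 'n \<Rightarrow> real"
    where "A = (\<lambda>r u. case r of None \<Rightarrow> 1 | Some i \<Rightarrow> u $ i)"
  define B :: "'n option \<Rightarrow> real"
    where "B = (\<lambda>r. case r of None \<Rightarrow> 1 | Some i \<Rightarrow> p $ i)"
  have solves_iff: "solves U UNIV A B m \<longleftrightarrow> sum m U = 1 \<and> (\<Sum>u\<in>U. m u *\<^sub>R u) = p" for m
  proof -
    have "solves U UNIV A B m \<longleftrightarrow> sum m U = 1 \<and> (\<forall>i. (\<Sum>u\<in>U. u $ i * m u) = p $ i)"
      unfolding solves_def A_def B_def by (auto split: option.split)
    also have "(\<forall>i. (\<Sum>u\<in>U. u $ i * m u) = p $ i) \<longleftrightarrow> (\<Sum>u\<in>U. m u *\<^sub>R u) = p"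
      by (simp add: vec_eq_iff mult.commute)
    finally show ?thesis .
  qed
  show ?thesis
  proof (rule unique_solution_in_subfield[OF F fin, of UNIV A B l])
    show "A r u \<in> F" if "u \<in> U" for r u
      using that UF subfield_one[OF F] by (auto simp: A_def split: option.split)
    show "B r \<in> F" for r
      using pF subfield_one[OF F] by (auto simp: B_def split: option.split)
    show "solves U UNIV A B l"
      using sum1 comb solves_iff by blast
    show "\<forall>u\<in>U. m u = l u" if "solves U UNIV A B m" for m
    proof -
      have "sum m U = 1" "(\<Sum>u\<in>U. m u *\<^sub>R u) = p"
        using that solves_iff by blast+
      then have "sum (\<lambda>u. m u - l u) U = 0" "(\<Sum>u\<in>U. (m u - l u) *\<^sub>R u) = 0"
        using sum1 comb by (simp_all add: sum_subtractf scaleR_diff_left)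
      then have "\<forall>u\<in>U. m u - l u = 0"
        using indep affine_dependent_explicit_finite[OF fin] by blast
      then show ?thesis by simp
    qed
  qed
qed

lemma positive_support_combination:
  fixes S :: "'a::real_vector set"
  assumes "finite S" "\<forall>s\<in>S. 0 \<le> u s"
  shows "sum u {s\<in>S. 0 < u s} = sum u S"
    and "(\<Sum>s\<in>{s\<in>S. 0 < u s}. u s *\<^sub>R s) = (\<Sum>s\<in>S. u s *\<^sub>R s)"
proof -
  have zero: "\<forall>s\<in>S - {s\<in>S. 0 < u s}. u s = 0"
  proof
    fix s assume "s \<in> S - {s\<in>S. 0 < u s}"
    then have "0 \<le> u s" "\<not> 0 < u s" using assms(2) by auto
    then show "u s = 0" by linarith
  qed
  have sub: "{s\<in>S. 0 < u s} \<subseteq> S" by blast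
  show "sum u {s\<in>S. 0 < u s} = sum u S"
    by (rule sum.mono_neutral_left[OF assms(1) sub zero])
  show "(\<Sum>s\<in>{s\<in>S. 0 < u s}. u s *\<^sub>R s) = (\<Sum>s\<in>S. u s *\<^sub>R s)"
    using sum.mono_neutral_left[OF assms(1) sub, of "\<lambda>s. u s *\<^sub>R s"] zero by (metis scale_zero_left)
qed

lemma convex_hull_positive_combination:
  fixes X :: "'a::real_vector set"
  assumes "z \<in> convex hull X"
  obtains S u where "finite S" "S \<subseteq> X" "\<forall>s\<in>S. 0 < u s" "sum u S = 1" "(\<Sum>s\<in>S. u s *\<^sub>R s) = z"
proof -
  obtain S u where S: "finite S" "S \<subseteq> X" "\<forall>s\<in>S. 0 \<le> u s" "sum u S = 1" "(\<Sum>s\<in>S. u s *\<^sub>R s) = z"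
    using assms unfolding convex_hull_explicit by blast
  show ?thesis
  proof (rule that[of "{s\<in>S. 0 < u s}" u])
    show "finite {s \<in> S. 0 < u s}" "{s \<in> S. 0 < u s} \<subseteq> X" "\<forall>s\<in>{s \<in> S. 0 < u s}. 0 < u s"
      using S(1,2) by auto
    show "sum u {s \<in> S. 0 < u s} = 1" "(\<Sum>s\<in>{s \<in> S. 0 < u s}. u s *\<^sub>R s) = z"
      using positive_support_combination[OF S(1,3)] S(4,5) by simp_all
  qed
qed

lemma affine_dependency_oriented:
  fixes S :: "'a::real_vector set"
  assumes "finite S" "affine_dependent S"
  obtains e where "sum e S = 0" "(\<Sum>s\<in>S. e s *\<^sub>R s) = 0" "e x \<le> 0" "\<exists>s\<in>S. 0 < e s"
proof -
  obtain d where d: "sum d S = 0" "\<exists>v\<in>S. d v \<noteq> 0" "(\<Sum>v\<in>S. d v *\<^sub>R v) = 0"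
    using affine_dependent_explicit_finite[OF assms(1)] assms(2) by blast
  define e where "e = (if d x > 0 then (\<lambda>v. - d v) else d)"
  have e: "sum e S = 0" "\<exists>v\<in>S. e v \<noteq> 0" "(\<Sum>v\<in>S. e v *\<^sub>R v) = 0" "e x \<le> 0"
    using d by (auto simp: e_def sum_negf scaleR_left.sum[symmetric])
  have "\<exists>s\<in>S. 0 < e s"
  proof (rule ccontr)
    assume "\<not> (\<exists>s\<in>S. 0 < e s)"
    then have "\<forall>s\<in>S. 0 \<le> - e s" by (auto simp: not_less)
    moreover have "sum (\<lambda>s. - e s) S = 0" using e(1) by (simp add: sum_negf)
    ultimately have "\<forall>s\<in>S. - e s = 0"
      using sum_nonneg_eq_0_iff[OF assms(1), of "\<lambda>s. - e s"] by blast
    then show False using e(2) by simp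
  qed
  then show ?thesis using that e(1,3,4) by blast
qed

text \<open>Moving a strictly positive convex combination along an oriented dependency e until the
  first weight vanishes yields a representation of the same point on a proper subset which
  still contains x.\<close>

lemma shift_along_dependency:
  fixes S :: "'a::real_vector set"
  assumes fin: "finite S" and x: "x \<in> S" and pos: "\<forall>s\<in>S. 0 < l s"
    and sum1: "sum l S = 1" and comb: "(\<Sum>s\<in>S. l s *\<^sub>R s) = p"
    and e: "sum e S = 0" "(\<Sum>s\<in>S. e s *\<^sub>R s) = 0" "e x \<le> 0" "\<exists>s\<in>S. 0 < e s"
  obtains S' l' where "S' \<subset> S" "x \<in> S'" "\<forall>s\<in>S'. 0 < l' s" "sum l' S' = 1"
    "(\<Sum>s\<in>S'. l' s *\<^sub>R s) = p"
proof -
  define P where "P = {s\<in>S. 0 < e s}"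
  have "finite P" "P \<noteq> {}" using fin e(4) by (auto simp: P_def)
  define t where "t = Min ((\<lambda>s. l s / e s) ` P)"
  have "t \<in> (\<lambda>s. l s / e s) ` P"
    unfolding t_def using \<open>finite P\<close> \<open>P \<noteq> {}\<close> by (intro Min_in) auto
  then obtain s0 where s0: "s0 \<in> P" "t = l s0 / e s0" by blast
  have t_le: "t \<le> l s / e s" if "s \<in> P" for s
    unfolding t_def using \<open>finite P\<close> that by (intro Min_le) auto
  have t_pos: "0 < t"
  proof -
    have "0 < l s0" "0 < e s0" using s0(1) pos by (auto simp: P_def)
    then show ?thesis using s0(2) by simp
  qed
  define l' where "l' = (\<lambda>s. l s - t * e s)"
  have l'_nonneg: "\<forall>s\<in>S. 0 \<le> l' s"
  proof
    fix s assume s: "s \<in> S"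
    show "0 \<le> l' s"
    proof (cases "s \<in> P")
      case True
      then show ?thesis using t_le[OF True] by (simp add: l'_def P_def pos_le_divide_eq)
    next
      case False
      then have "e s \<le> 0" using s by (auto simp: P_def)
      then have "t * e s \<le> 0" using t_pos by (simp add: mult_nonneg_nonpos)
      moreover have "0 < l s" using pos s by blast
      ultimately show ?thesis by (simp add: l'_def)
    qed
  qed
  define S' where "S' = {s\<in>S. 0 < l' s}"
  have "s0 \<notin> S'" "s0 \<in> S" using s0 by (auto simp: S'_def l'_def P_def)
  then have "S' \<subset> S" by (auto simp: S'_def)
  have "t * e x \<le> 0" using e(3) t_pos by (simp add: mult_nonneg_nonpos)
  moreover have "0 < l x" using x pos by blast
  ultimately have "x \<in> S'" using x by (simp add: S'_def l'_def)
  have "sum l' S = 1"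
    using sum1 e(1) by (simp add: l'_def sum_subtractf sum_distrib_left[symmetric])
  moreover have "(\<Sum>s\<in>S. l' s *\<^sub>R s) = p"
  proof -
    have "(\<Sum>s\<in>S. (t * e s) *\<^sub>R s) = t *\<^sub>R (\<Sum>s\<in>S. e s *\<^sub>R s)"
      by (simp add: scaleR_right.sum)
    then show ?thesis using comb e(2) by (simp add: l'_def scaleR_diff_left sum_subtractf)
  qed
  ultimately have "sum l' S' = 1" "(\<Sum>s\<in>S'. l' s *\<^sub>R s) = p"
    using positive_support_combination[OF fin l'_nonneg] unfolding S'_def by simp_all
  moreover have "\<forall>s\<in>S'. 0 < l' s" by (simp add: S'_def)
  ultimately show ?thesis using that \<open>S' \<subset> S\<close> \<open>x \<in> S'\<close> by blast
qed

lemma affinely_independent_reduction: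
  fixes S :: "'a::real_vector set"
  assumes "finite S" "x \<in> S" "\<forall>s\<in>S. 0 < l s" "sum l S = 1" "(\<Sum>s\<in>S. l s *\<^sub>R s) = p"
  obtains U l' where "U \<subseteq> S" "x \<in> U" "\<not> affine_dependent U" "\<forall>u\<in>U. 0 < l' u"
    "sum l' U = 1" "(\<Sum>u\<in>U. l' u *\<^sub>R u) = p"
  using assms
proof (induction "card S" arbitrary: S l thesis rule: less_induct)
  case less
  show ?case
  proof (cases "affine_dependent S")
    case False
    then show ?thesis using less.prems by blast
  next
    case True
    then obtain e where "sum e S = 0" "(\<Sum>s\<in>S. e s *\<^sub>R s) = 0" "e x \<le> 0" "\<exists>s\<in>S. 0 < e s"
      using affine_dependency_oriented[OF less.prems(2)] by blast
    then obtain S' l' where S': "S' \<subset> S" "x \<in> S'" "\<forall>s\<in>S'. 0 < l' s" "sum l' S' = 1"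
        "(\<Sum>s\<in>S'. l' s *\<^sub>R s) = p"
      using shift_along_dependency[OF less.prems(2-6)] by blast
    have "card S' < card S" "finite S'"
      using S'(1) less.prems(2) by (auto intro: psubset_card_mono finite_subset)
    then obtain U l'' where "U \<subseteq> S'" "x \<in> U" "\<not> affine_dependent U" "\<forall>u\<in>U. 0 < l'' u"
        "sum l'' U = 1" "(\<Sum>u\<in>U. l'' u *\<^sub>R u) = p"
      using less.hyps S'(2-5) by blast
    then show ?thesis using less.prems(1) S'(1) by blast
  qed
qed

text \<open>A subfield of the reals contains arbitrarily small positive elements (namely 1/N).\<close>

lemma subfield_small_positive:
  assumes F: "real_subfield F" and "0 < m"
  obtains t where "t \<in> F" "0 < t" "t < 1" "t \<le> m"
proof -
  define N where "N = nat \<lceil>1 / m\<rceil> + 2"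
  have N: "1 / m \<le> real N" "2 \<le> real N" unfolding N_def by linarith+
  show ?thesis
  proof (rule that[of "1 / real N"])
    show "1 / real N \<in> F" using F by (simp add: subfield_divide subfield_one subfield_of_nat)
    show "0 < 1 / real N" "1 / real N < 1" using N(2) by simp_all
    show "1 / real N \<le> m" using N \<open>0 < m\<close> by (simp add: field_simps)
  qed
qed

lemma conv_K_subset_convex_hull: "conv_K K Y \<subseteq> convex hull Y"
  unfolding conv_K_def convex_hull_explicit by blast

lemma conv_K_singleton: "1 \<in> K \<Longrightarrow> x \<in> U \<Longrightarrow> x \<in> conv_K K U"
  unfolding conv_K_def by (intro CollectI exI[of _ "{x}"] exI[of _ "\<lambda>_. 1"]) auto

lemma conv_K_finite:
  assumes "0 \<in> K" "finite U"
  shows "y \<in> conv_K K U \<longleftrightarrow>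
    (\<exists>r. (\<forall>s\<in>U. r s \<in> K \<and> 0 \<le> r s) \<and> sum r U = 1 \<and> (\<Sum>s\<in>U. r s *\<^sub>R s) = y)"
proof
  assume "y \<in> conv_K K U"
  then obtain S r where S: "finite S" "S \<subseteq> U" "\<forall>s\<in>S. r s \<in> K \<and> 0 \<le> r s" "sum r S = 1"
    "(\<Sum>s\<in>S. r s *\<^sub>R s) = y" unfolding conv_K_def by blast
  define r' where "r' = (\<lambda>s. if s \<in> S then r s else 0)"
  have "sum r' U = sum r S"
    unfolding r'_def using assms(2) S(2) by (simp add: sum.inter_restrict[symmetric] Int_absorb1)
  moreover have "(\<Sum>s\<in>U. r' s *\<^sub>R s) = (\<Sum>s\<in>S. r s *\<^sub>R s)"
    unfolding r'_def using assms(2) S(2) by (simp add: if_distrib[of "\<lambda>c. c *\<^sub>R _"] sum.inter_restrict[symmetric] Int_absorb1 cong: if_cong)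
  moreover have "\<forall>s\<in>U. r' s \<in> K \<and> 0 \<le> r' s" using S(3) assms(1) by (simp add: r'_def)
  ultimately show "\<exists>r. (\<forall>s\<in>U. r s \<in> K \<and> 0 \<le> r s) \<and> sum r U = 1 \<and> (\<Sum>s\<in>U. r s *\<^sub>R s) = y"
    using S(4,5) by metis
next
  assume "\<exists>r. (\<forall>s\<in>U. r s \<in> K \<and> 0 \<le> r s) \<and> sum r U = 1 \<and> (\<Sum>s\<in>U. r s *\<^sub>R s) = y"
  then show "y \<in> conv_K K U" unfolding conv_K_def using assms(2) by blast
qed

lemma split_off_relint_K:
  assumes F: "real_subfield F" and fin: "finite U"
    and t: "t \<in> F" "0 < t" "t < 1" and t_le: "\<And>u. u \<in> U \<Longrightarrow> t \<le> l u"
    and lF: "\<forall>u\<in>U. l u \<in> F" and sum1: "sum l U = 1" and comb: "(\<Sum>u\<in>U. l u *\<^sub>R u) = p"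
    and y: "y \<in> conv_K F U"
  obtains z where "z \<in> conv_K F U" "p = t *\<^sub>R y + (1 - t) *\<^sub>R z"
proof -
  have F0: "0 \<in> F" using F by (rule subfield_zero)
  obtain r where r: "\<forall>s\<in>U. r s \<in> F \<and> 0 \<le> r s" "sum r U = 1" "(\<Sum>s\<in>U. r s *\<^sub>R s) = y"
    using y unfolding conv_K_finite[OF F0 fin] by blast
  define c where "c = (\<lambda>s. (l s - t * r s) / (1 - t))"
  define z where "z = (\<Sum>s\<in>U. c s *\<^sub>R s)"
  have c_nonneg: "0 \<le> c s" if "s \<in> U" for s
  proof -
    have "r s \<le> sum r U" using fin r(1) that by (intro member_le_sum) auto
    then have "t * r s \<le> t" using r(2) t(2) by (simp add: mult_left_le)
    then show ?thesis using t_le[OF that] t(3) by (simp add: c_def)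
  qed
  have c_in_F: "c s \<in> F" if "s \<in> U" for s
    unfolding c_def using that lF r(1) t(1) F
    by (simp add: subfield_divide subfield_diff subfield_mult subfield_one)
  have "sum c U = (sum l U - t * sum r U) / (1 - t)"
    unfolding c_def by (simp add: sum_divide_distrib[symmetric] sum_subtractf sum_distrib_left)
  then have "sum c U = 1" using sum1 r(2) t(3) by simp
  then have z_in: "z \<in> conv_K F U"
    unfolding z_def conv_K_finite[OF F0 fin] using c_nonneg c_in_F by blast
  have "(1 - t) *\<^sub>R z = (\<Sum>s\<in>U. (l s - t * r s) *\<^sub>R s)"
    unfolding z_def c_def using t(3) by (simp add: scaleR_right.sum)
  also have "\<dots> = p - t *\<^sub>R y"
  proof -
    have "(\<Sum>s\<in>U. (t * r s) *\<^sub>R s) = t *\<^sub>R y"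
      by (simp add: r(3)[symmetric] scaleR_right.sum)
    then show ?thesis using comb by (simp add: scaleR_diff_left sum_subtractf)
  qed
  finally have "p = t *\<^sub>R y + (1 - t) *\<^sub>R z" by simp
  with z_in show ?thesis by (rule that)
qed

text \<open>A strictly positive convex combination with weights in F lies in the F-relative
  interior of the F-convex hull: choose t \<in> F below all weights and split off t y.\<close>

lemma positive_combination_in_relint_K:
  assumes F: "real_subfield F" and fin: "finite U"
    and pos: "\<forall>u\<in>U. 0 < l u" and lF: "\<forall>u\<in>U. l u \<in> F"
    and sum1: "sum l U = 1" and comb: "(\<Sum>u\<in>U. l u *\<^sub>R u) = p"
  shows "p \<in> relint_K F (conv_K F U)"
proof -
  have "U \<noteq> {}" using sum1 by auto
  then have "0 < Min (l ` U)" using fin pos by simp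
  then obtain t where t: "t \<in> F" "0 < t" "t < 1" "t \<le> Min (l ` U)"
    using subfield_small_positive[OF F] by blast
  have t_le: "t \<le> l u" if "u \<in> U" for u
  proof -
    have "Min (l ` U) \<le> l u" using fin that by simp
    then show ?thesis using t(4) by linarith
  qed
  have "p \<in> conv_K F U"
    unfolding conv_K_finite[OF subfield_zero[OF F] fin] using pos lF sum1 comb
    by (auto intro!: less_imp_le)
  moreover have "\<exists>z\<in>conv_K F U. \<exists>t\<in>F. 0 < t \<and> t < 1 \<and> p = t *\<^sub>R y + (1 - t) *\<^sub>R z"
    if "y \<in> conv_K F U" for y
    using split_off_relint_K[OF F fin t(1-3) t_le lF sum1 comb that] t(1-3) by blast
  ultimately show ?thesis unfolding relint_K_def by blast
qed

lemma segment_positive_combination: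
  fixes X :: "'a::real_vector set"
  assumes x: "x \<in> X" and q: "q \<in> convex hull X" and t: "0 < t" "t < 1"
    and p: "p = t *\<^sub>R x + (1 - t) *\<^sub>R q"
  obtains S l where "finite S" "S \<subseteq> X" "x \<in> S" "\<forall>s\<in>S. 0 < l s"
    "sum l S = 1" "(\<Sum>s\<in>S. l s *\<^sub>R s) = p"
proof -
  obtain S \<mu> where S: "finite S" "S \<subseteq> X" "\<forall>s\<in>S. 0 < \<mu> s" "sum \<mu> S = 1" "(\<Sum>s\<in>S. \<mu> s *\<^sub>R s) = q"
    using convex_hull_positive_combination[OF q] by blast
  define T where "T = insert x S"
  define \<mu>' where "\<mu>' = (\<lambda>s. if s \<in> S then \<mu> s else 0)"
  define l where "l = (\<lambda>s. (1 - t) * \<mu>' s + (if s = x then t else 0))"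
  have fin: "finite T" using S(1) by (simp add: T_def)
  have TS: "T \<inter> S = S" by (auto simp: T_def)
  have "sum \<mu>' T = sum \<mu> S" "(\<Sum>s\<in>T. \<mu>' s *\<^sub>R s) = (\<Sum>s\<in>S. \<mu> s *\<^sub>R s)"
    unfolding \<mu>'_def using fin TS
    by (simp_all add: sum.inter_restrict[symmetric] if_distrib[of "\<lambda>c. c *\<^sub>R _"] cong: if_cong)
  then have "sum \<mu>' T = 1" "(\<Sum>s\<in>T. \<mu>' s *\<^sub>R s) = q" using S(4,5) by simp_all
  moreover have "(\<Sum>s\<in>T. ((1 - t) * \<mu>' s) *\<^sub>R s) = (1 - t) *\<^sub>R (\<Sum>s\<in>T. \<mu>' s *\<^sub>R s)"
    by (simp add: scaleR_right.sum)
  ultimately have "sum l T = 1" "(\<Sum>s\<in>T. l s *\<^sub>R s) = p"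
    using fin p
    by (simp_all add: l_def T_def sum.distrib sum_distrib_left[symmetric] scaleR_add_left
        if_distrib[of "\<lambda>c. c *\<^sub>R _"] cong: if_cong)
  moreover have "\<forall>s\<in>T. 0 < l s"
    using S(3) t by (auto simp: l_def \<mu>'_def T_def add_pos_nonneg add_nonneg_pos)
  ultimately show ?thesis
    using that[of T l] fin S(2) x by (simp add: T_def)
qed

text \<open>For a nonempty polyhedron, the faces in the sense of the paper are exactly the nonempty
  faces in the sense of the library, since every face of a polyhedron is exposed.\<close>

lemma poly_face_iff_face_of:
  fixes C :: "'a::euclidean_space set"
  assumes poly: "polyhedron C" and ne: "C \<noteq> {}"
  shows "poly_face C T \<longleftrightarrow> T face_of C \<and> T \<noteq> {}"
proof
  assume "poly_face C T"
  then consider "T = C"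
    | v w where "C \<subseteq> {u. 0 \<le> v \<bullet> (u - w)}" "T = C \<inter> {u. v \<bullet> (u - w) = 0}" "T \<noteq> {}"
    unfolding poly_face_def by blast
  then show "T face_of C \<and> T \<noteq> {}"
  proof cases
    case 1
    then show ?thesis using face_of_refl[OF polyhedron_imp_convex[OF poly]] ne by simp
  next
    case 2
    have "C \<inter> {u. v \<bullet> u = v \<bullet> w} face_of C"
      using 2(1) by (intro face_of_Int_supporting_hyperplane_ge polyhedron_imp_convex[OF poly])
        (auto simp: inner_diff_right)
    moreover have "T = C \<inter> {u. v \<bullet> u = v \<bullet> w}"
      using 2(2) by (auto simp: inner_diff_right)
    ultimately show ?thesis using 2(3) by simp
  qed
next
  assume T: "T face_of C \<and> T \<noteq> {}"
  then have "T exposed_face_of C" using exposed_face_of_polyhedron[OF poly] by blast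
  then obtain a b where ab: "C \<subseteq> {x. a \<bullet> x \<le> b}" "T = C \<inter> {x. a \<bullet> x = b}"
    unfolding exposed_face_of_def by blast
  obtain w where "w \<in> T" using T by blast
  then have "a \<bullet> w = b" using ab(2) by blast
  then have "C \<subseteq> {u. 0 \<le> (- a) \<bullet> (u - w)}" "T = C \<inter> {u. (- a) \<bullet> (u - w) = 0}"
    using ab by (auto simp: inner_diff_right)
  then show "poly_face C T" unfolding poly_face_def using T by blast
qed

text \<open>A face of conv X is the convex hull of the points of X it contains: a point of the
  face is in the relative interior of the hull of the points carrying it, and a face containing
  a relative interior point of a convex subset contains the whole subset.\<close>

lemma face_of_convex_hull_Int:
  fixes X :: "'a::euclidean_space set"
  assumes T: "T face_of convex hull X"
  shows "convex hull (T \<inter> X) = T"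
proof
  show "convex hull (T \<inter> X) \<subseteq> T"
    using face_of_imp_convex[OF T] by (intro hull_minimal) auto
  show "T \<subseteq> convex hull (T \<inter> X)"
  proof
    fix z assume "z \<in> T"
    then have "z \<in> convex hull X" using face_of_imp_subset[OF T] by blast
    then obtain S u where S: "finite S" "S \<subseteq> X" "\<forall>s\<in>S. 0 < u s" "sum u S = 1"
        "(\<Sum>s\<in>S. u s *\<^sub>R s) = z"
      by (rule convex_hull_positive_combination)
    have z_rel: "z \<in> rel_interior (convex hull S)"
      using explicit_subset_rel_interior_convex_hull_minimal[OF S(1)] S(3-5) by blast
    have "convex hull S \<subseteq> T"
      using \<open>z \<in> T\<close> z_rel by (intro subset_of_face_of[OF T] hull_mono S(2)) blast
    then have "S \<subseteq> T \<inter> X" using S(2) hull_subset[of S convex] by blast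
    then show "z \<in> convex hull (T \<inter> X)"
      using z_rel rel_interior_subset hull_mono by blast
  qed
qed

lemma face_imp_weak_face:
  fixes X :: "'a::real_vector set"
  assumes F: "real_subfield F" and T: "T face_of convex hull X"
  shows "weak_face F X (T \<inter> X)"
  unfolding weak_face_def
proof (intro conjI allI impI)
  show "T \<inter> X \<subseteq> X" by blast
  fix U assume UX: "U \<subseteq> X" and "conv_K F (T \<inter> X) \<inter> relint_K F (conv_K F U) \<noteq> {}"
  then obtain p where p_Y: "p \<in> conv_K F (T \<inter> X)" and p_U: "p \<in> relint_K F (conv_K F U)"
    by blast
  have "conv_K F (T \<inter> X) \<subseteq> T"
    using conv_K_subset_convex_hull hull_minimal[of "T \<inter> X" T convex] face_of_imp_convex[OF T]
    by blast
  then have p_T: "p \<in> T" using p_Y by blast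
  show "U \<subseteq> T \<inter> X"
  proof
    fix x assume "x \<in> U"
    then have "x \<in> conv_K F U" using conv_K_singleton subfield_one[OF F] by blast
    then obtain z t where z: "z \<in> conv_K F U" and t: "0 < t" "t < 1"
        and p: "p = t *\<^sub>R x + (1 - t) *\<^sub>R z"
      using p_U unfolding relint_K_def by blast
    have "z \<in> convex hull X"
      using z conv_K_subset_convex_hull hull_mono[OF UX] by blast
    have "x \<in> convex hull X" using \<open>x \<in> U\<close> UX hull_subset[of X convex] by blast
    have "x \<in> T"
    proof (cases "x = z")
      case True
      then have "p = x" using p by (simp add: scaleR_left_distrib[symmetric])
      then show ?thesis using p_T by simp
    next
      case False
      have "\<exists>u. 0 < u \<and> u < 1 \<and> p = (1 - u) *\<^sub>R x + u *\<^sub>R z"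
        using t p by (intro exI[of _ "1 - t"]) simp
      then have "p \<in> open_segment x z" using False by (simp add: in_segment(2))
      then show ?thesis
        using face_ofD[OF T _ \<open>x \<in> convex hull X\<close> \<open>z \<in> convex hull X\<close> p_T] by blast
    qed
    then show "x \<in> T \<inter> X" using \<open>x \<in> U\<close> UX by blast
  qed
qed

text \<open>Every point of a polyhedron lies in the relative interior of some face, namely of the
  smallest face containing it: otherwise it would lie on a facet of that face, which is a
  strictly smaller face containing it.\<close>

lemma face_containing_in_rel_interior:
  fixes C :: "'a::euclidean_space set"
  assumes poly: "polyhedron C" and "p \<in> C"
  obtains T where "T face_of C" "p \<in> rel_interior T"
proof -
  define T where "T = \<Inter>{T. T face_of C \<and> p \<in> T}"
  have T: "T face_of C"
    unfolding T_def using face_of_refl[OF polyhedron_imp_convex[OF poly]] \<open>p \<in> C\<close>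
    by (intro face_of_Inter) auto
  have "p \<in> T" unfolding T_def by blast
  have "p \<in> rel_interior T"
  proof (rule ccontr)
    assume "p \<notin> rel_interior T"
    then have "p \<in> \<Union>{G. G facet_of T}"
      using rel_boundary_of_polyhedron[OF face_of_polyhedron_polyhedron[OF poly T]] \<open>p \<in> T\<close>
      by blast
    then obtain G where G: "G facet_of T" "p \<in> G" by blast
    then have "G face_of C" using face_of_trans[OF facet_of_imp_face_of T] by blast
    then have "T \<subseteq> G" unfolding T_def using G(2) by blast
    then have "G = T" using facet_of_imp_subset[OF G(1)] by blast
    then show False using G(1) by simp
  qed
  then show ?thesis using T that by blast
qed

text \<open>A nonempty set of F-rational points has an F-rational point in the relative interior of
  its convex hull which is also an F-convex combination: the barycentre of an affine basis.\<close>

lemma subfield_point_in_rel_interior: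
  fixes Y :: "(real ^ 'n) set"
  assumes F: "real_subfield F" and "Y \<noteq> {}" and YF: "\<forall>y\<in>Y. \<forall>i. y $ i \<in> F"
  obtains p where "p \<in> conv_K F Y" "p \<in> rel_interior (convex hull Y)" "\<forall>i. p $ i \<in> F"
proof -
  obtain B where B: "B \<subseteq> Y" "\<not> affine_dependent B" "affine hull Y = affine hull B"
    using affine_basis_exists[of Y] by blast
  have fin: "finite B" using aff_independent_finite[OF B(2)] .
  have "B \<noteq> {}" using B(3) \<open>Y \<noteq> {}\<close> by auto
  define w where "w = 1 / real (card B)"
  define p where "p = (\<Sum>b\<in>B. w *\<^sub>R b)"
  have w: "0 < w" "w \<in> F" "sum (\<lambda>_. w) B = 1"
    using fin \<open>B \<noteq> {}\<close> F by (simp_all add: w_def card_gt_0_iff subfield_divide subfield_one subfield_of_nat)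
  show ?thesis
  proof (rule that[of p])
    show "p \<in> conv_K F Y"
      unfolding conv_K_def p_def using fin B(1) w by (intro CollectI exI[of _ B] exI[of _ "\<lambda>_. w"]) auto
    have "p \<in> rel_interior (convex hull B)"
    proof -
      have "\<exists>u. (\<forall>x\<in>B. 0 < u x) \<and> sum u B = 1 \<and> (\<Sum>x\<in>B. u x *\<^sub>R x) = p"
        unfolding p_def using w by (intro exI[of _ "\<lambda>_. w"]) simp
      then show ?thesis unfolding rel_interior_convex_hull_explicit[OF B(2)] by blast
    qed
    moreover have "rel_interior (convex hull B) \<subseteq> rel_interior (convex hull Y)"
      using hull_mono[OF B(1)] B(3) by (intro subset_rel_interior) auto
    ultimately show "p \<in> rel_interior (convex hull Y)" by blast
    show "\<forall>i. p $ i \<in> F"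
    proof
      fix i
      have "\<forall>b\<in>B. w * b $ i \<in> F" using B(1) YF w(2) F by (simp add: subset_iff subfield_mult)
      then show "p $ i \<in> F" unfolding p_def using F by (simp add: subfield_sum)
    qed
  qed
qed

lemma weak_face_absorbs_segment:
  fixes X Y :: "(real ^ 'n) set"
  assumes F: "real_subfield F" and XF: "\<forall>x\<in>X. \<forall>i. x $ i \<in> F" and wf: "weak_face F X Y"
    and p_Y: "p \<in> conv_K F Y" and pF: "\<forall>i. p $ i \<in> F"
    and x: "x \<in> X" and q: "q \<in> convex hull X" and t: "0 < t" "t < 1"
    and p: "p = t *\<^sub>R x + (1 - t) *\<^sub>R q"
  shows "x \<in> Y"
proof -
  obtain S l where S: "finite S" "S \<subseteq> X" "x \<in> S" "\<forall>s\<in>S. 0 < l s" "sum l S = 1"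
      "(\<Sum>s\<in>S. l s *\<^sub>R s) = p"
    using segment_positive_combination[OF x q t p] .
  obtain U l' where U: "U \<subseteq> S" "x \<in> U" "\<not> affine_dependent U" "\<forall>u\<in>U. 0 < l' u"
      "sum l' U = 1" "(\<Sum>u\<in>U. l' u *\<^sub>R u) = p"
    using affinely_independent_reduction[OF S(1,3-6)] .
  have UX: "U \<subseteq> X" using U(1) S(2) by blast
  have "\<forall>u\<in>U. l' u \<in> F"
    using barycentric_coords_in_subfield[OF F _ pF U(3,5,6)] UX XF by blast
  then have "p \<in> relint_K F (conv_K F U)"
    using positive_combination_in_relint_K[OF F aff_independent_finite[OF U(3)] U(4) _ U(5,6)] by blast
  then have "U \<subseteq> Y" using wf UX p_Y unfolding weak_face_def by blast
  then show ?thesis using U(2) by blast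
qed

text \<open>Every nonempty weak F-face of X is the trace of a face of the polyhedron conv X: take
  the face carrying an F-rational relative interior point of conv Y.\<close>

lemma weak_face_imp_face:
  fixes X Y :: "(real ^ 'n) set"
  assumes F: "real_subfield F" and XF: "\<forall>x\<in>X. \<forall>i. x $ i \<in> F"
    and poly: "polyhedron (convex hull X)" and "Y \<noteq> {}" and wf: "weak_face F X Y"
  obtains T where "T face_of convex hull X" "Y = T \<inter> X"
proof -
  have YX: "Y \<subseteq> X" using wf unfolding weak_face_def by blast
  obtain p where p_Y: "p \<in> conv_K F Y" and p_rel: "p \<in> rel_interior (convex hull Y)"
      and pF: "\<forall>i. p $ i \<in> F"
    using subfield_point_in_rel_interior[OF F \<open>Y \<noteq> {}\<close>] YX XF by blast
  have hull_Y: "convex hull Y \<subseteq> convex hull X" using hull_mono[OF YX] .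
  then have "p \<in> convex hull X" using p_rel rel_interior_subset by blast
  then obtain T where T: "T face_of convex hull X" and p_T: "p \<in> rel_interior T"
    using face_containing_in_rel_interior[OF poly] by blast
  have "convex hull Y \<subseteq> T"
    using p_T p_rel rel_interior_subset by (intro subset_of_face_of[OF T hull_Y]) blast
  then have "Y \<subseteq> T \<inter> X" using YX hull_subset[of Y convex] by blast
  moreover have "T \<inter> X \<subseteq> Y"
  proof
    fix x assume x: "x \<in> T \<inter> X"
    have "convex T" "T \<noteq> {}" using face_of_imp_convex[OF T] p_T rel_interior_subset by blast+
    then obtain e where e: "1 < e" "(1 - e) *\<^sub>R x + e *\<^sub>R p \<in> T"
      using p_T x convex_rel_interior_iff by blast
    define q where "q = (1 - e) *\<^sub>R x + e *\<^sub>R p"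
    have "q \<in> convex hull X" using e(2) face_of_imp_subset[OF T] by (auto simp: q_def)
    moreover have "p = (1 - 1 / e) *\<^sub>R x + (1 - (1 - 1 / e)) *\<^sub>R q"
      using e(1) by (simp add: q_def algebra_simps)
    moreover have "0 < 1 - 1 / e" "1 - 1 / e < 1" using e(1) by simp_all
    ultimately show "x \<in> Y"
      using weak_face_absorbs_segment[OF F XF wf p_Y pF] x by blast
  qed
  ultimately have "Y = T \<inter> X" by (rule antisym)
  with T show ?thesis by (rule that)
qed

theorem theorem4p4:
  fixes F :: "real set" and X Y :: "(real ^ 'n) set"
  assumes "real_subfield F"
    and "X \<noteq> {}"
    and "\<forall>x\<in>X. \<forall>i. x $ i \<in> F"
    and "polyhedron (convex hull X)"
    and "Y \<noteq> {}" and "Y \<subseteq> X"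
  shows "(weak_face F X Y \<longleftrightarrow> (\<exists>Fc. poly_face (convex hull X) Fc \<and> Y = Fc \<inter> X)) \<and>
         (\<forall>Fc. poly_face (convex hull X) Fc \<and> Y = Fc \<inter> X \<longrightarrow> convex hull Y = Fc)"
proof -
  have face_iff: "poly_face (convex hull X) T \<longleftrightarrow> T face_of convex hull X \<and> T \<noteq> {}" for T
    using poly_face_iff_face_of[OF assms(4)] assms(2) by simp
  show ?thesis
  proof (intro conjI iffI allI impI)
    assume "weak_face F X Y"
    then obtain T where "T face_of convex hull X" "Y = T \<inter> X"
      using weak_face_imp_face[OF assms(1,3,4,5)] by blast
    then show "\<exists>Fc. poly_face (convex hull X) Fc \<and> Y = Fc \<inter> X"
      using face_iff assms(5) by blast
  next
    assume "\<exists>Fc. poly_face (convex hull X) Fc \<and> Y = Fc \<inter> X"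
    then show "weak_face F X Y" using face_iff face_imp_weak_face[OF assms(1)] by blast
  next
    fix Fc assume "poly_face (convex hull X) Fc \<and> Y = Fc \<inter> X"
    then show "convex hull Y = Fc" using face_iff face_of_convex_hull_Int by blast
  qed
qed

end
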